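(* Let $k>0$ be an integer, $q\in[0,1]$, and let $m<M_{k,q}$. Let $h=h(n)$ satisfy $h(n)>2\,\mathbb{E}[X_{n,M_{k,q}}(k)]$. Then $$\Pr\left[X_{n,m}(k)<h^{-1}\cdot\mathbb{E}[X_{n,m}(k)]\right]\leq 2q.$$
   Context: $G^*(n,m)$ is the random graph on $n$ vertices obtained by inserting $m$ edges, each choosing its two endpoints uniformly at random with replacement, then deleting self-loops and replacing multiple edges by single edges. $X_{n,m}(k)=|\mathcal{S}_k(G^*(n,m))|$ is the number of independent sets of size exactly $k$ in $G^*(n,m)$, and $M_{k,q}=\max\{m\in\mathbb{N}:\Pr[X_{n,m}(k)>0]\geq1-q\}$. *)

theory Defs
  imports "HOL-Probability.Probability"
begin

definition edge_lists :: "nat \<Rightarrow> nat \<Rightarrow> (nat \<times> nat) list set" where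
  "edge_lists n m = {xs. set xs \<subseteq> {..<n} \<times> {..<n} \<and> length xs = m}"

text \<open>Delete self-loops, merge multiple edges.\<close>
definition edges_of :: "(nat \<times> nat) list \<Rightarrow> nat set set" where
  "edges_of xs = {{u, v} | u v. (u, v) \<in> set xs \<and> u \<noteq> v}"

text \<open>G*(n,m): m edges, each with both endpoints uniform (with replacement).\<close>
definition Gstar :: "nat \<Rightarrow> nat \<Rightarrow> nat set set pmf" where
  "Gstar n m = map_pmf edges_of (pmf_of_set (edge_lists n m))"

definition indep_sets :: "nat \<Rightarrow> nat set set \<Rightarrow> nat \<Rightarrow> nat set set" where
  "indep_sets n E k = {S. S \<subseteq> {..<n} \<and> card S = k \<and> (\<forall>u\<in>S. \<forall>v\<in>S. {u, v} \<notin> E)}"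

definition Xk :: "nat \<Rightarrow> nat \<Rightarrow> nat set set \<Rightarrow> real" where
  "Xk n k E = real (card (indep_sets n E k))"

definition EXk :: "nat \<Rightarrow> nat \<Rightarrow> nat \<Rightarrow> real" where
  "EXk n m k = measure_pmf.expectation (Gstar n m) (Xk n k)"

definition good_m :: "nat \<Rightarrow> nat \<Rightarrow> real \<Rightarrow> nat \<Rightarrow> bool" where
  "good_m n k q m \<longleftrightarrow> measure_pmf.prob (Gstar n m) {E. Xk n k E > 0} \<ge> 1 - q"

definition Mkq :: "nat \<Rightarrow> nat \<Rightarrow> real \<Rightarrow> nat" where
  "Mkq n k q = (GREATEST m. good_m n k q m)"

end

theory Submission imports Defs begin

text \<open>Sample the M = m + d edges of G*(n,M) as the m edges of G*(n,m) followed by d further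
  edges. A fixed k-set stays independent under the d new edges with probability
  s = (1 - (k^2 - k)/n^2)^d, so E[X_{n,M}(k)] = s E[X_{n,m}(k)], and the same holds conditionally
  on the first m edges. If the first m edges give X < E[X_{n,m}(k)]/h, the conditional
  expectation of X_{n,M}(k) is below E[X_{n,M}(k)]/h < 1/2, and by Markov's inequality the
  completed graph has no independent k-set with probability at least 1/2. Hence
  Pr[X_{n,m}(k) < E[X_{n,m}(k)]/h] \<le> 2 Pr[X_{n,M}(k) = 0] \<le> 2q.\<close>

lemma finite_edge_lists: "finite (edge_lists n m)"
  unfolding edge_lists_def by (rule finite_lists_length_eq) auto

lemma card_edge_lists: "card (edge_lists n m) = (n * n) ^ m"
  unfolding edge_lists_def using card_lists_length_eq[of "{..<n} \<times> {..<n}" m] by simp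

lemma edge_lists_nonempty: "0 < n \<Longrightarrow> edge_lists n m \<noteq> {}"
  using card_edge_lists[of n m] by (metis card.empty nat_0_less_mult_iff power_not_zero less_not_refl2)

lemma of_nat_card_filter:
  "finite A \<Longrightarrow> of_nat (card {x \<in> A. P x}) = (\<Sum>x\<in>A. of_bool (P x))"
  by (simp add: Collect_conj_eq)

lemma prob_Gstar:
  assumes "0 < n"
  shows "measure_pmf.prob (Gstar n m) {E. P E}
    = real (card {xs \<in> edge_lists n m. P (edges_of xs)}) / real ((n * n) ^ m)"
  unfolding Gstar_def card_edge_lists[symmetric]
  using measure_pmf_of_set[OF edge_lists_nonempty[OF assms] finite_edge_lists]
  by (simp add: vimage_def Collect_conj_eq Int_commute)

lemma EXk_eq_average:
  assumes "0 < n"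
  shows "EXk n m k = (\<Sum>xs\<in>edge_lists n m. Xk n k (edges_of xs)) / real ((n * n) ^ m)"
  unfolding EXk_def Gstar_def card_edge_lists[symmetric]
  using integral_pmf_of_set[OF edge_lists_nonempty[OF assms] finite_edge_lists] by simp

lemma sum_edge_lists_add:
  fixes g :: "(nat \<times> nat) list \<Rightarrow> 'a::comm_monoid_add"
  shows "(\<Sum>zs\<in>edge_lists n (m + d). g zs) = (\<Sum>xs\<in>edge_lists n m. \<Sum>ys\<in>edge_lists n d. g (xs @ ys))"
proof -
  have split: "edge_lists n (m + d) = (\<lambda>(xs, ys). xs @ ys) ` (edge_lists n m \<times> edge_lists n d)"
  proof (intro equalityI subsetI)
    fix zs assume "zs \<in> edge_lists n (m + d)"
    then have "(take m zs, drop m zs) \<in> edge_lists n m \<times> edge_lists n d"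
      unfolding edge_lists_def using set_take_subset set_drop_subset by fastforce
    then show "zs \<in> (\<lambda>(xs, ys). xs @ ys) ` (edge_lists n m \<times> edge_lists n d)"
      by (metis (no_types, lifting) append_take_drop_id case_prod_conv image_eqI)
  qed (auto simp: edge_lists_def)
  have inj: "inj_on (\<lambda>(xs, ys). xs @ ys) (edge_lists n m \<times> edge_lists n d)"
    by (auto simp: inj_on_def edge_lists_def)
  show ?thesis
    unfolding split sum.reindex[OF inj] sum.cartesian_product by (simp add: case_prod_beta)
qed

lemma edges_of_append: "edges_of (xs @ ys) = edges_of xs \<union> edges_of ys"
  unfolding edges_of_def by auto

lemma indep_sets_Un: "indep_sets n (A \<union> B) k = indep_sets n A k \<inter> indep_sets n B k"
  unfolding indep_sets_def by auto

lemma finite_indep_sets: "finite (indep_sets n E k)"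
  by (rule finite_subset[of _ "Pow {..<n}"]) (auto simp: indep_sets_def)

lemma Xk_nonneg: "0 \<le> Xk n k E"
  by (simp add: Xk_def)

lemma in_indep_sets_edges_of_iff:
  assumes "S \<subseteq> {..<n}" "card S = k"
  shows "S \<in> indep_sets n (edges_of ys) k \<longleftrightarrow> set ys \<inter> {(u, v). u \<in> S \<and> v \<in> S \<and> u \<noteq> v} = {}"
proof -
  have "{u, v} \<in> edges_of ys \<longleftrightarrow> (u, v) \<in> set ys \<and> u \<noteq> v \<or> (v, u) \<in> set ys \<and> u \<noteq> v" for u v
    unfolding edges_of_def by (auto simp: doubleton_eq_iff)
  then show ?thesis
    using assms unfolding indep_sets_def by blast
qed

text \<open>The d new edges must avoid the k^2 - k ordered pairs of distinct vertices of S.\<close>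

lemma card_edge_lists_keeping_indep_set:
  assumes "S \<subseteq> {..<n}" "card S = k"
  shows "card {ys \<in> edge_lists n d. S \<in> indep_sets n (edges_of ys) k} = (n * n - (k * k - k)) ^ d"
proof -
  define Inside where "Inside = {(u, v). u \<in> S \<and> v \<in> S \<and> u \<noteq> v}"
  have "finite S"
    using assms(1) finite_subset by blast
  have "Inside = S \<times> S - (\<lambda>u. (u, u)) ` S"
    unfolding Inside_def by auto
  moreover have "card ((\<lambda>u. (u, u)) ` S) = k"
    using assms(2) by (simp add: card_image inj_on_def)
  ultimately have "card Inside = k * k - k"
    using assms \<open>finite S\<close> by (simp add: card_Diff_subset card_cartesian_product image_subset_iff)
  moreover have "Inside \<subseteq> {..<n} \<times> {..<n}"
    using assms(1) unfolding Inside_def by auto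
  ultimately have card_outside: "card ({..<n} \<times> {..<n} - Inside) = n * n - (k * k - k)"
    by (subst card_Diff_subset) (auto intro: finite_subset)
  have "{ys \<in> edge_lists n d. S \<in> indep_sets n (edges_of ys) k}
      = {ys. set ys \<subseteq> {..<n} \<times> {..<n} - Inside \<and> length ys = d}"
    unfolding in_indep_sets_edges_of_iff[OF assms] Inside_def edge_lists_def by auto
  then show ?thesis
    using card_lists_length_eq[of "{..<n} \<times> {..<n} - Inside" d] card_outside by simp
qed

lemma sum_Xk_append:
  "(\<Sum>ys\<in>edge_lists n d. Xk n k (edges_of (xs @ ys)))
    = Xk n k (edges_of xs) * real ((n * n - (k * k - k)) ^ d)"
proof -
  let ?I = "\<lambda>xs. indep_sets n (edges_of xs) k"
  have "(\<Sum>ys\<in>edge_lists n d. Xk n k (edges_of (xs @ ys)))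
      = (\<Sum>ys\<in>edge_lists n d. \<Sum>S\<in>?I xs. of_bool (S \<in> ?I ys))"
    using finite_indep_sets by (simp add: Xk_def edges_of_append indep_sets_Un)
  also have "\<dots> = (\<Sum>S\<in>?I xs. \<Sum>ys\<in>edge_lists n d. of_bool (S \<in> ?I ys))"
    by (rule sum.swap)
  also have "\<dots> = (\<Sum>S\<in>?I xs. real ((n * n - (k * k - k)) ^ d))"
  proof (rule sum.cong[OF refl])
    fix S assume "S \<in> ?I xs"
    then have "S \<subseteq> {..<n}" "card S = k"
      unfolding indep_sets_def by auto
    then show "(\<Sum>ys\<in>edge_lists n d. of_bool (S \<in> ?I ys)) = real ((n * n - (k * k - k)) ^ d)"
      by (simp flip: of_nat_card_filter[OF finite_edge_lists]
          add: card_edge_lists_keeping_indep_set)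
  qed
  finally show ?thesis
    by (simp add: Xk_def)
qed

text \<open>Markov's inequality for the extensions of a fixed edge list xs.\<close>

lemma card_append_no_indep_set_ge:
  "real ((n * n) ^ d) - Xk n k (edges_of xs) * real ((n * n - (k * k - k)) ^ d)
    \<le> real (card {ys \<in> edge_lists n d. Xk n k (edges_of (xs @ ys)) = 0})"
proof -
  have "real ((n * n) ^ d) - Xk n k (edges_of xs) * real ((n * n - (k * k - k)) ^ d)
      = (\<Sum>ys\<in>edge_lists n d. 1 - Xk n k (edges_of (xs @ ys)))"
    by (simp add: sum_subtractf sum_Xk_append card_edge_lists)
  also have "\<dots> \<le> (\<Sum>ys\<in>edge_lists n d. of_bool (Xk n k (edges_of (xs @ ys)) = 0))"
    by (rule sum_mono) (auto simp: Xk_def)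
  also have "\<dots> = real (card {ys \<in> edge_lists n d. Xk n k (edges_of (xs @ ys)) = 0})"
    by (rule of_nat_card_filter[OF finite_edge_lists, symmetric])
  finally show ?thesis .
qed

definition survival :: "nat \<Rightarrow> nat \<Rightarrow> nat \<Rightarrow> real" where
  "survival n k d = real ((n * n - (k * k - k)) ^ d) / real ((n * n) ^ d)"

lemma survival_nonneg: "0 \<le> survival n k d"
  by (simp add: survival_def)

lemma EXk_add:
  assumes "0 < n"
  shows "EXk n (m + d) k = survival n k d * EXk n m k"
proof -
  have "EXk n (m + d) k
      = (\<Sum>xs\<in>edge_lists n m. \<Sum>ys\<in>edge_lists n d. Xk n k (edges_of (xs @ ys))) / real ((n * n) ^ (m + d))"
    by (simp add: EXk_eq_average[OF assms] sum_edge_lists_add)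
  also have "\<dots> = survival n k d * EXk n m k"
    by (simp add: sum_Xk_append EXk_eq_average[OF assms] survival_def power_add
        sum_distrib_right[symmetric] mult.commute)
  finally show ?thesis .
qed

lemma prob_Xk_zero_add_ge:
  assumes "0 < n"
  shows "measure_pmf.prob (Gstar n m) {E. survival n k d * Xk n k E \<le> 1 / 2}
    \<le> 2 * measure_pmf.prob (Gstar n (m + d)) {E. Xk n k E = 0}"
proof -
  define Nm where "Nm = real ((n * n) ^ m)"
  define Nd where "Nd = real ((n * n) ^ d)"
  let ?B = "\<lambda>xs. survival n k d * Xk n k (edges_of xs) \<le> 1 / 2"
  let ?Z = "\<lambda>xs. real (card {ys \<in> edge_lists n d. Xk n k (edges_of (xs @ ys)) = 0})"
  have "0 < Nm" "0 < Nd"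
    using assms by (simp_all add: Nm_def Nd_def)
  have many_zeros: "Nd / 2 \<le> ?Z xs" if "?B xs" for xs
  proof -
    have "Xk n k (edges_of xs) * real ((n * n - (k * k - k)) ^ d)
        = Nd * (survival n k d * Xk n k (edges_of xs))"
      using \<open>0 < Nd\<close> by (simp add: survival_def Nd_def)
    also have "\<dots> \<le> Nd / 2"
      using that \<open>0 < Nd\<close> mult_left_mono[OF that, of Nd] by simp
    finally show ?thesis
      using card_append_no_indep_set_ge[of n d k xs] unfolding Nd_def by linarith
  qed
  have "real (card {xs \<in> edge_lists n m. ?B xs}) * (Nd / 2)
      = (\<Sum>xs\<in>edge_lists n m. of_bool (?B xs) * (Nd / 2))"
    by (simp add: of_nat_card_filter[OF finite_edge_lists] sum_distrib_right)
  also have "\<dots> \<le> (\<Sum>xs\<in>edge_lists n m. ?Z xs)"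
    using many_zeros by (intro sum_mono) auto
  also have "\<dots> = real (card {zs \<in> edge_lists n (m + d). Xk n k (edges_of zs) = 0})"
    by (simp add: of_nat_card_filter[OF finite_edge_lists] sum_edge_lists_add)
  finally have "real (card {xs \<in> edge_lists n m. ?B xs}) / Nm
      \<le> 2 * (real (card {zs \<in> edge_lists n (m + d). Xk n k (edges_of zs) = 0}) / (Nm * Nd))"
    using \<open>0 < Nm\<close> \<open>0 < Nd\<close> by (simp add: field_simps)
  then show ?thesis
    unfolding prob_Gstar[OF assms] power_add of_nat_mult Nm_def Nd_def .
qed

lemma good_m_Mkq:
  assumes "\<exists>M. good_m n k q M \<and> (\<forall>m'. good_m n k q m' \<longrightarrow> m' \<le> M)"
  shows "good_m n k q (Mkq n k q)"
  unfolding Mkq_def using assms by (metis (mono_tags, lifting) GreatestI_nat)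

lemma prob_Xk_zero_le_if_good_m:
  assumes "good_m n k q M"
  shows "measure_pmf.prob (Gstar n M) {E. Xk n k E = 0} \<le> q"
proof -
  have "{E. Xk n k E = 0} = UNIV - {E. Xk n k E > 0}"
    using Xk_nonneg[of n k] by (auto simp: less_le)
  then show ?thesis
    using assms measure_pmf.prob_compl[of "{E. Xk n k E > 0}" "Gstar n M"]
    by (simp add: good_m_def)
qed

theorem lemma4p3:
  fixes n k m :: nat and q h :: real
  assumes "0 < n"
    and "0 < k"
    and "0 \<le> q" and "q \<le> 1"
    and "\<exists>M. good_m n k q M \<and> (\<forall>m'. good_m n k q m' \<longrightarrow> m' \<le> M)"
    and "m < Mkq n k q"
    and "h > 2 * EXk n (Mkq n k q) k"
  shows "measure_pmf.prob (Gstar n m) {E. Xk n k E < EXk n m k / h} \<le> 2 * q"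
proof -
  define d where "d = Mkq n k q - m"
  have M: "Mkq n k q = m + d"
    using assms(6) unfolding d_def by simp
  have EM: "EXk n (Mkq n k q) k = survival n k d * EXk n m k"
    unfolding M using EXk_add[OF assms(1)] .
  have "0 \<le> EXk n (Mkq n k q) k"
    unfolding EXk_def by (simp add: Xk_nonneg)
  then have "0 < h"
    using assms(7) by linarith
  have "survival n k d * x \<le> 1 / 2" if "x < EXk n m k / h" for x
  proof -
    have "survival n k d * x \<le> survival n k d * (EXk n m k / h)"
      using that survival_nonneg by (intro mult_left_mono) simp_all
    also have "\<dots> = EXk n (Mkq n k q) k / h"
      by (simp add: EM)
    also have "\<dots> \<le> 1 / 2"
      using assms(7) \<open>0 < h\<close> by (simp add: field_simps)
    finally show ?thesis .
  qed
  then have "{E. Xk n k E < EXk n m k / h} \<subseteq> {E. survival n k d * Xk n k E \<le> 1 / 2}"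
    by blast
  then have "measure_pmf.prob (Gstar n m) {E. Xk n k E < EXk n m k / h}
      \<le> measure_pmf.prob (Gstar n m) {E. survival n k d * Xk n k E \<le> 1 / 2}"
    by (rule measure_pmf.finite_measure_mono) simp
  also have "\<dots> \<le> 2 * measure_pmf.prob (Gstar n (Mkq n k q)) {E. Xk n k E = 0}"
    unfolding M by (rule prob_Xk_zero_add_ge[OF assms(1)])
  also have "\<dots> \<le> 2 * q"
    using prob_Xk_zero_le_if_good_m[OF good_m_Mkq[OF assms(5)]] by simp
  finally show ?thesis .
qed

end
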